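(* Let $S$ be a quasi-adequate semigroup with an adequate transversal $S^0$, and let $x,y$ be regular elements of $S$. Then $\overline{xy}=\overline{x}\,\overline{y}$.
   Context: For a semigroup $S$, $S^1$ is $S$ with an identity adjoined, $\mathcal{L},\mathcal{R}$ Green's relations. $\mathcal{R}^\ast=\{(a,b):\forall x,y\in S^1,\ xa=ya\iff xb=yb\}$, $\mathcal{L}^\ast=\{(a,b):\forall x,y\in S^1,\ ax=ay\iff bx=by\}$. $S$ is abundant if each $\mathcal{R}^\ast$- and $\mathcal{L}^\ast$-class contains an idempotent; adequate if also idempotents commute (then $a^+$, $a^\ast$ are the unique idempotents $\mathcal{R}^\ast$-, resp. $\mathcal{L}^\ast$-related to $a$). Quasi-adequate: abundant with idempotents forming a subsemigroup. An abundant subsemigroup $U$ of abundant $S$ is a $\ast$-subsemigroup if $\mathcal{L}^\ast(U)=\mathcal{L}^\ast(S)\cap(U\times U)$, $\mathcal{R}^\ast(U)=\mathcal{R}^\ast(S)\cap(U\times U)$. An adequate $\ast$-subsemigroup $S^0$ of abundant $S$ is an adequate transversal if each $x\in S$ has a unique $\overline{x}\in S^0$ and idempotents $e,f$ of $S$ with $x=e\overline{x}f$, $e\,\mathcal{L}\,\overline{x}^+$, $f\,\mathcal{R}\,\overline{x}^\ast$. *)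

theory Defs
  imports Main
begin

text \<open>Semigroups are modelled as a multiplicatively closed carrier set inside a
type of class semigroup_mult. The monoid S^1 is modelled by 'a option, where None
plays the role of the adjoined identity.\<close>

definition subsemigroup :: "'a::semigroup_mult set \<Rightarrow> bool" where
  "subsemigroup A \<longleftrightarrow> (\<forall>a\<in>A. \<forall>b\<in>A. a * b \<in> A)"

definition ones :: "'a set \<Rightarrow> 'a option set" where
  "ones A = insert None (Some ` A)"

fun lm :: "'a::semigroup_mult option \<Rightarrow> 'a \<Rightarrow> 'a" where
  "lm None a = a"
| "lm (Some x) a = x * a"

fun rm :: "'a::semigroup_mult \<Rightarrow> 'a option \<Rightarrow> 'a" where
  "rm a None = a"
| "rm a (Some x) = a * x"

definition idems :: "'a::semigroup_mult set \<Rightarrow> 'a set" where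
  "idems A = {e \<in> A. e * e = e}"

definition greenL :: "'a::semigroup_mult set \<Rightarrow> ('a \<times> 'a) set" where
  "greenL A = {(a, b). a \<in> A \<and> b \<in> A \<and>
     (\<lambda>x. lm x a) ` ones A = (\<lambda>x. lm x b) ` ones A}"

definition greenR :: "'a::semigroup_mult set \<Rightarrow> ('a \<times> 'a) set" where
  "greenR A = {(a, b). a \<in> A \<and> b \<in> A \<and>
     (\<lambda>x. rm a x) ` ones A = (\<lambda>x. rm b x) ` ones A}"

definition Rstar :: "'a::semigroup_mult set \<Rightarrow> ('a \<times> 'a) set" where
  "Rstar A = {(a, b). a \<in> A \<and> b \<in> A \<and>
     (\<forall>x\<in>ones A. \<forall>y\<in>ones A. lm x a = lm y a \<longleftrightarrow> lm x b = lm y b)}"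

definition Lstar :: "'a::semigroup_mult set \<Rightarrow> ('a \<times> 'a) set" where
  "Lstar A = {(a, b). a \<in> A \<and> b \<in> A \<and>
     (\<forall>x\<in>ones A. \<forall>y\<in>ones A. rm a x = rm a y \<longleftrightarrow> rm b x = rm b y)}"

definition abundant :: "'a::semigroup_mult set \<Rightarrow> bool" where
  "abundant A \<longleftrightarrow> subsemigroup A \<and>
     (\<forall>a\<in>A. \<exists>e\<in>idems A. (a, e) \<in> Rstar A) \<and>
     (\<forall>a\<in>A. \<exists>e\<in>idems A. (a, e) \<in> Lstar A)"

definition adequate :: "'a::semigroup_mult set \<Rightarrow> bool" where
  "adequate A \<longleftrightarrow> abundant A \<and> (\<forall>e\<in>idems A. \<forall>f\<in>idems A. e * f = f * e)"

definition quasi_adequate :: "'a::semigroup_mult set \<Rightarrow> bool" where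
  "quasi_adequate A \<longleftrightarrow> abundant A \<and> subsemigroup (idems A)"

definition star_subsemigroup :: "'a::semigroup_mult set \<Rightarrow> 'a set \<Rightarrow> bool" where
  "star_subsemigroup U A \<longleftrightarrow> U \<subseteq> A \<and> abundant U \<and>
     Lstar U = Lstar A \<inter> (U \<times> U) \<and> Rstar U = Rstar A \<inter> (U \<times> U)"

definition plus_of :: "'a::semigroup_mult set \<Rightarrow> 'a \<Rightarrow> 'a" where
  "plus_of U a = (THE e. e \<in> idems U \<and> (a, e) \<in> Rstar U)"

definition star_of :: "'a::semigroup_mult set \<Rightarrow> 'a \<Rightarrow> 'a" where
  "star_of U a = (THE e. e \<in> idems U \<and> (a, e) \<in> Lstar U)"

definition transversal_rep :: "'a::semigroup_mult set \<Rightarrow> 'a set \<Rightarrow> 'a \<Rightarrow> 'a \<Rightarrow> bool" where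
  "transversal_rep S0 S x x0 \<longleftrightarrow> x0 \<in> S0 \<and>
     (\<exists>e\<in>idems S. \<exists>f\<in>idems S. x = e * x0 * f \<and>
        (e, plus_of S0 x0) \<in> greenL S \<and> (f, star_of S0 x0) \<in> greenR S)"

definition adequate_transversal :: "'a::semigroup_mult set \<Rightarrow> 'a set \<Rightarrow> bool" where
  "adequate_transversal S0 S \<longleftrightarrow> adequate S0 \<and> star_subsemigroup S0 S \<and>
     (\<forall>x\<in>S. \<exists>!x0. transversal_rep S0 S x x0)"

definition bar :: "'a::semigroup_mult set \<Rightarrow> 'a set \<Rightarrow> 'a \<Rightarrow> 'a" where
  "bar S0 S x = (THE x0. transversal_rep S0 S x x0)"

definition regular_in :: "'a::semigroup_mult set \<Rightarrow> 'a \<Rightarrow> bool" where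
  "regular_in S x \<longleftrightarrow> x \<in> S \<and> (\<exists>y\<in>S. x * y * x = x)"

end

theory Submission
  imports Defs
begin

text \<open>The representative a of a regular x shares an inverse x' with x, and x' lies in
  the transversal. Conversely, if z and c \<in> S0 share an inverse c' \<in> S0, then
  z = (z c') c (c' z) with z c' L c c' = c+ and c' z R c' c = c*, so c represents z.
  For regular x, y with such common inverses x', y', the product y' x' is a common inverse
  of x y and of the product of the representatives; this needs that the idempotents of the
  adequate transversal commute and that the idempotents of S form a subsemigroup.\<close>

definition mutual_inverse :: "'a::semigroup_mult \<Rightarrow> 'a \<Rightarrow> bool" where
  "mutual_inverse x x' \<longleftrightarrow> x * x' * x = x \<and> x' * x * x' = x'"

lemma mutual_inverse_idem:
  assumes "mutual_inverse x x'"
  shows "x * x' * (x * x') = x * x'" and "x' * x * (x' * x) = x' * x"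
  using assms unfolding mutual_inverse_def by (metis mult.assoc)+

lemma mutual_inverse_mult:
  fixes x x' y y' a b :: "'a::semigroup_mult"
  assumes x: "mutual_inverse x x'" "mutual_inverse a x'"
    and y: "mutual_inverse y y'" "mutual_inverse b y'"
    and comm: "x' * a * (b * y') = b * y' * (x' * a)"
    and idem_fg: "x' * x * (y * y') * (x' * x * (y * y')) = x' * x * (y * y')"
    and idem_gf: "y * y' * (x' * x) * (y * y' * (x' * x)) = y * y' * (x' * x)"
  shows "mutual_inverse (x * y) (y' * x')" and "mutual_inverse (a * b) (y' * x')"
proof -
  have xx: "x * x' * x = x" "x' * x * x' = x'" and aa: "a * x' * a = a" "x' * a * x' = x'"
    using x by (simp_all add: mutual_inverse_def)
  have yy: "y * y' * y = y" "y' * y * y' = y'" and bb: "b * y' * b = b" "y' * b * y' = y'"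
    using y by (simp_all add: mutual_inverse_def)
  define f g where "f = x' * x" and "g = y * y'"
  have xf: "x * f = x" and fx': "f * x' = x'" and gy: "g * y = y" and y'g: "y' * g = y'"
    using xx yy by (simp_all add: f_def g_def mult.assoc)
  have "x * y * (y' * x') * (x * y) = x * g * f * y"
    by (simp add: f_def g_def mult.assoc)
  also have "\<dots> = (x * f) * g * f * (g * y)"
    by (simp only: xf gy)
  also have "\<dots> = x * (f * g * (f * g)) * y"
    by (simp add: mult.assoc)
  also have "\<dots> = (x * f) * (g * y)"
    using idem_fg by (simp add: f_def g_def mult.assoc)
  finally have 1: "x * y * (y' * x') * (x * y) = x * y"
    by (simp add: xf gy)
  have "y' * x' * (x * y) * (y' * x') = y' * f * g * x'"
    by (simp add: f_def g_def mult.assoc)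
  also have "\<dots> = (y' * g) * f * g * (f * x')"
    by (simp only: y'g fx')
  also have "\<dots> = y' * (g * f * (g * f)) * x'"
    by (simp add: mult.assoc)
  also have "\<dots> = (y' * g) * (f * x')"
    using idem_gf by (simp add: f_def g_def mult.assoc)
  finally have 2: "y' * x' * (x * y) * (y' * x') = y' * x'"
    by (simp add: y'g fx')
  show "mutual_inverse (x * y) (y' * x')"
    using 1 2 by (simp add: mutual_inverse_def)
  have "a * b * (y' * x') * (a * b) = a * (b * y' * (x' * a)) * b"
    by (simp add: mult.assoc)
  also have "\<dots> = a * (x' * a * (b * y')) * b"
    by (simp only: comm)
  also have "\<dots> = (a * x' * a) * (b * y' * b)"
    by (simp add: mult.assoc)
  finally have 3: "a * b * (y' * x') * (a * b) = a * b"
    using aa bb by simp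
  have "y' * x' * (a * b) * (y' * x') = y' * (x' * a * (b * y')) * x'"
    by (simp add: mult.assoc)
  also have "\<dots> = y' * (b * y' * (x' * a)) * x'"
    by (simp only: comm)
  also have "\<dots> = (y' * b * y') * (x' * a * x')"
    by (simp add: mult.assoc)
  finally have 4: "y' * x' * (a * b) * (y' * x') = y' * x'"
    using aa bb by simp
  show "mutual_inverse (a * b) (y' * x')"
    using 3 4 by (simp add: mutual_inverse_def)
qed

lemma subsemigroupD: "subsemigroup A \<Longrightarrow> a \<in> A \<Longrightarrow> b \<in> A \<Longrightarrow> a * b \<in> A"
  by (simp add: subsemigroup_def)

lemma idemsD: "e \<in> idems A \<Longrightarrow> e \<in> A \<and> e * e = e"
  by (simp add: idems_def)

lemma lm_mult: "lm w a * b = lm w (a * b)"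
  by (cases w) (simp_all add: mult.assoc)

lemma rm_mult: "b * rm a w = rm (b * a) w"
  by (cases w) (simp_all add: mult.assoc)

lemma lm_closed: "subsemigroup A \<Longrightarrow> w \<in> ones A \<Longrightarrow> a \<in> A \<Longrightarrow> lm w a \<in> A"
  by (cases w) (auto simp: ones_def subsemigroup_def)

lemma rm_closed: "subsemigroup A \<Longrightarrow> w \<in> ones A \<Longrightarrow> a \<in> A \<Longrightarrow> rm a w \<in> A"
  by (cases w) (auto simp: ones_def subsemigroup_def)

lemma greenL_idems_iff:
  assumes A: "subsemigroup A" and "e \<in> idems A" "f \<in> idems A"
  shows "(e, f) \<in> greenL A \<longleftrightarrow> e * f = e \<and> f * e = f"
proof -
  have e: "e \<in> A" "e * e = e" and f: "f \<in> A" "f * f = f"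
    using assms(2,3) by (simp_all add: idems_def)
  have principal_mono: "(\<lambda>w. lm w a) ` ones A \<subseteq> (\<lambda>w. lm w b) ` ones A"
    if "a \<in> A" "a * b = a" for a b
  proof
    fix z assume "z \<in> (\<lambda>w. lm w a) ` ones A"
    then obtain w where w: "w \<in> ones A" "z = lm w a" by auto
    have "z = lm (Some (lm w a)) b" using w that by (simp add: lm_mult)
    moreover have "Some (lm w a) \<in> ones A"
      using lm_closed[OF A w(1) that(1)] by (simp add: ones_def)
    ultimately show "z \<in> (\<lambda>w. lm w b) ` ones A" by blast
  qed
  have mem: "c \<in> (\<lambda>w. lm w c) ` ones A" for c
    by (force simp: ones_def)
  show ?thesis
  proof
    assume "(e, f) \<in> greenL A"
    then have eq: "(\<lambda>w. lm w e) ` ones A = (\<lambda>w. lm w f) ` ones A"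
      by (simp add: greenL_def)
    obtain w v where "e = lm w f" "f = lm v e"
      using mem[of e] mem[of f] unfolding eq by (metis imageE eq)
    then show "e * f = e \<and> f * e = f"
      using e f by (metis lm_mult)
  next
    assume "e * f = e \<and> f * e = f"
    then show "(e, f) \<in> greenL A"
      using principal_mono[of e f] principal_mono[of f e] e f by (auto simp: greenL_def)
  qed
qed

lemma greenR_idems_iff:
  assumes A: "subsemigroup A" and "e \<in> idems A" "f \<in> idems A"
  shows "(e, f) \<in> greenR A \<longleftrightarrow> f * e = e \<and> e * f = f"
proof -
  have e: "e \<in> A" "e * e = e" and f: "f \<in> A" "f * f = f"
    using assms(2,3) by (simp_all add: idems_def)
  have principal_mono: "(\<lambda>w. rm a w) ` ones A \<subseteq> (\<lambda>w. rm b w) ` ones A"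
    if "a \<in> A" "b * a = a" for a b
  proof
    fix z assume "z \<in> (\<lambda>w. rm a w) ` ones A"
    then obtain w where w: "w \<in> ones A" "z = rm a w" by auto
    have "z = rm b (Some (rm a w))" using w that by (simp add: rm_mult)
    moreover have "Some (rm a w) \<in> ones A"
      using rm_closed[OF A w(1) that(1)] by (simp add: ones_def)
    ultimately show "z \<in> (\<lambda>w. rm b w) ` ones A" by blast
  qed
  have mem: "c \<in> (\<lambda>w. rm c w) ` ones A" for c
    by (force simp: ones_def)
  show ?thesis
  proof
    assume "(e, f) \<in> greenR A"
    then have eq: "(\<lambda>w. rm e w) ` ones A = (\<lambda>w. rm f w) ` ones A"
      by (simp add: greenR_def)
    obtain w v where "e = rm f w" "f = rm e v"
      using mem[of e] mem[of f] unfolding eq by (metis imageE eq)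
    then show "f * e = e \<and> e * f = f"
      using e f by (metis rm_mult)
  next
    assume "f * e = e \<and> e * f = f"
    then show "(e, f) \<in> greenR A"
      using principal_mono[of e f] principal_mono[of f e] e f by (auto simp: greenR_def)
  qed
qed

lemma Rstar_sym: "(a, b) \<in> Rstar A \<Longrightarrow> (b, a) \<in> Rstar A"
  by (auto simp: Rstar_def)

lemma Lstar_sym: "(a, b) \<in> Lstar A \<Longrightarrow> (b, a) \<in> Lstar A"
  by (auto simp: Lstar_def)

lemma Rstar_cancel:
  assumes "(a, b) \<in> Rstar A" "u \<in> A" "v \<in> A" "u * a = v * a"
  shows "u * b = v * b"
proof -
  have "Some u \<in> ones A" "Some v \<in> ones A"
    using assms(2,3) by (simp_all add: ones_def)
  then show ?thesis
    using assms(1,4) unfolding Rstar_def by fastforce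
qed

lemma Lstar_cancel:
  assumes "(a, b) \<in> Lstar A" "u \<in> A" "v \<in> A" "a * u = a * v"
  shows "b * u = b * v"
proof -
  have "Some u \<in> ones A" "Some v \<in> ones A"
    using assms(2,3) by (simp_all add: ones_def)
  then show ?thesis
    using assms(1,4) unfolding Lstar_def by fastforce
qed

lemma Rstar_cancel_unit:
  assumes "(a, b) \<in> Rstar A" "u \<in> A" "u * a = a"
  shows "u * b = b"
proof -
  have "Some u \<in> ones A" "None \<in> ones A"
    using assms(2) by (simp_all add: ones_def)
  then show ?thesis
    using assms(1,3) unfolding Rstar_def by fastforce
qed

lemma Lstar_cancel_unit:
  assumes "(a, b) \<in> Lstar A" "u \<in> A" "a * u = a"
  shows "b * u = b"
proof -
  have "Some u \<in> ones A" "None \<in> ones A"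
    using assms(2) by (simp_all add: ones_def)
  then show ?thesis
    using assms(1,3) unfolding Lstar_def by fastforce
qed

lemma Rstar_idem_left_unit: "(a, e) \<in> Rstar A \<Longrightarrow> e \<in> idems A \<Longrightarrow> e * a = a"
  by (metis Rstar_cancel_unit Rstar_sym idemsD)

lemma Lstar_idem_right_unit: "(a, e) \<in> Lstar A \<Longrightarrow> e \<in> idems A \<Longrightarrow> a * e = a"
  by (metis Lstar_cancel_unit Lstar_sym idemsD)

lemma Rstar_if_greenR:
  assumes "a \<in> A" "e \<in> A" "e * a = a" "a * w = e"
  shows "(a, e) \<in> Rstar A"
proof -
  have "lm x a = lm y a \<longleftrightarrow> lm x e = lm y e" for x y
    by (metis assms(3,4) lm_mult)
  then show ?thesis
    using assms(1,2) by (simp add: Rstar_def)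
qed

lemma Lstar_if_greenL:
  assumes "a \<in> A" "e \<in> A" "a * e = a" "w * a = e"
  shows "(a, e) \<in> Lstar A"
proof -
  have "rm a x = rm a y \<longleftrightarrow> rm e x = rm e y" for x y
    by (metis assms(3,4) rm_mult)
  then show ?thesis
    using assms(1,2) by (simp add: Lstar_def)
qed

lemma adequate_Rstar_idem_unique:
  assumes U: "adequate U" and "e \<in> idems U" "e' \<in> idems U"
    and "(a, e) \<in> Rstar U" "(a, e') \<in> Rstar U"
  shows "e = e'"
proof -
  have "e * e' = e'" "e' * e = e"
    using assms(2-5) by (metis Rstar_cancel_unit Rstar_idem_left_unit idemsD)+
  moreover have "e * e' = e' * e"
    using U assms(2,3) by (simp add: adequate_def)
  ultimately show ?thesis by simp
qed

lemma adequate_Lstar_idem_unique: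
  assumes U: "adequate U" and "e \<in> idems U" "e' \<in> idems U"
    and "(a, e) \<in> Lstar U" "(a, e') \<in> Lstar U"
  shows "e = e'"
proof -
  have "e' * e = e'" "e * e' = e"
    using assms(2-5) by (metis Lstar_cancel_unit Lstar_idem_right_unit idemsD)+
  moreover have "e * e' = e' * e"
    using U assms(2,3) by (simp add: adequate_def)
  ultimately show ?thesis by simp
qed

lemma adequate_plus_of:
  assumes U: "adequate U" and "a \<in> U"
  shows "plus_of U a \<in> idems U \<and> (a, plus_of U a) \<in> Rstar U"
proof -
  obtain e where "e \<in> idems U" "(a, e) \<in> Rstar U"
    using assms by (auto simp: adequate_def abundant_def)
  then have "\<exists>!e. e \<in> idems U \<and> (a, e) \<in> Rstar U"
    using adequate_Rstar_idem_unique[OF U] by blast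
  then show ?thesis
    unfolding plus_of_def by (rule theI')
qed

lemma adequate_star_of:
  assumes U: "adequate U" and "a \<in> U"
  shows "star_of U a \<in> idems U \<and> (a, star_of U a) \<in> Lstar U"
proof -
  obtain e where "e \<in> idems U" "(a, e) \<in> Lstar U"
    using assms by (auto simp: adequate_def abundant_def)
  then have "\<exists>!e. e \<in> idems U \<and> (a, e) \<in> Lstar U"
    using adequate_Lstar_idem_unique[OF U] by blast
  then show ?thesis
    unfolding star_of_def by (rule theI')
qed

lemma adequate_plus_of_eqI:
  "adequate U \<Longrightarrow> a \<in> U \<Longrightarrow> e \<in> idems U \<Longrightarrow> (a, e) \<in> Rstar U \<Longrightarrow> plus_of U a = e"
  using adequate_plus_of adequate_Rstar_idem_unique by metis

lemma adequate_star_of_eqI: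
  "adequate U \<Longrightarrow> a \<in> U \<Longrightarrow> e \<in> idems U \<Longrightarrow> (a, e) \<in> Lstar U \<Longrightarrow> star_of U a = e"
  using adequate_star_of adequate_Lstar_idem_unique by metis

lemma adequate_plus_of_idem: "adequate U \<Longrightarrow> e \<in> idems U \<Longrightarrow> plus_of U e = e"
  by (metis adequate_plus_of_eqI Rstar_if_greenR idemsD)

lemma adequate_star_of_idem: "adequate U \<Longrightarrow> e \<in> idems U \<Longrightarrow> star_of U e = e"
  by (metis adequate_star_of_eqI Lstar_if_greenL idemsD)

locale adequate_transversal_semigroup =
  fixes S0 S :: "'a::semigroup_mult set"
  assumes subsemigroup_S: "subsemigroup S"
    and adequate_transversal_S0: "adequate_transversal S0 S"
begin

lemma adequate_S0: "adequate S0"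
  using adequate_transversal_S0 by (simp add: adequate_transversal_def)

lemma subsemigroup_S0: "subsemigroup S0"
  using adequate_S0 by (simp add: adequate_def abundant_def)

lemma S0_subset: "S0 \<subseteq> S"
  using adequate_transversal_S0 by (simp add: adequate_transversal_def star_subsemigroup_def)

lemma idems_S0_subset: "idems S0 \<subseteq> idems S"
  using S0_subset by (auto simp: idems_def)

lemma Rstar_S0_subset: "Rstar S0 \<subseteq> Rstar S"
  using adequate_transversal_S0 by (auto simp: adequate_transversal_def star_subsemigroup_def)

lemma Lstar_S0_subset: "Lstar S0 \<subseteq> Lstar S"
  using adequate_transversal_S0 by (auto simp: adequate_transversal_def star_subsemigroup_def)

lemma bar_rep: "x \<in> S \<Longrightarrow> transversal_rep S0 S x (bar S0 S x)"
  using adequate_transversal_S0 unfolding adequate_transversal_def bar_def by (blast intro: theI')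

lemma bar_eqI: "x \<in> S \<Longrightarrow> transversal_rep S0 S x a \<Longrightarrow> bar S0 S x = a"
  using adequate_transversal_S0 bar_rep unfolding adequate_transversal_def by blast

lemma plus_of_S0:
  assumes "a \<in> S0"
  shows "plus_of S0 a \<in> idems S0" "plus_of S0 a * a = a"
  using adequate_plus_of[OF adequate_S0 assms] Rstar_idem_left_unit by blast+

lemma star_of_S0:
  assumes "a \<in> S0"
  shows "star_of S0 a \<in> idems S0" "a * star_of S0 a = a"
  using adequate_star_of[OF adequate_S0 assms] Lstar_idem_right_unit by blast+

lemma plus_of_cancel:
  "a \<in> S0 \<Longrightarrow> u \<in> S \<Longrightarrow> v \<in> S \<Longrightarrow> u * a = v * a \<Longrightarrow>
    u * plus_of S0 a = v * plus_of S0 a"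
  using adequate_plus_of[OF adequate_S0] Rstar_S0_subset Rstar_cancel by blast

lemma star_of_cancel:
  "a \<in> S0 \<Longrightarrow> u \<in> S \<Longrightarrow> v \<in> S \<Longrightarrow> a * u = a * v \<Longrightarrow>
    star_of S0 a * u = star_of S0 a * v"
  using adequate_star_of[OF adequate_S0] Lstar_S0_subset Lstar_cancel by blast

lemma transversal_rep_iff:
  "transversal_rep S0 S x a \<longleftrightarrow> a \<in> S0 \<and> (\<exists>e\<in>idems S. \<exists>f\<in>idems S. x = e * a * f \<and>
     e * plus_of S0 a = e \<and> plus_of S0 a * e = plus_of S0 a \<and>
     star_of S0 a * f = f \<and> f * star_of S0 a = star_of S0 a)"
proof (cases "a \<in> S0")
  case True
  then have "plus_of S0 a \<in> idems S" "star_of S0 a \<in> idems S"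
    using plus_of_S0 star_of_S0 idems_S0_subset by blast+
  then show ?thesis
    using greenL_idems_iff[OF subsemigroup_S] greenR_idems_iff[OF subsemigroup_S]
    unfolding transversal_rep_def by (metis (no_types, lifting))
qed (simp add: transversal_rep_def)

text \<open>For x = e a f, a left unit u of x fixes e: since f a* = a* and a a* = a, it gives
  u e a = e a, and since a is Rstar-related to a+ in S0, hence in S, also u e a+ = e a+.\<close>

lemma rep_left_unit:
  assumes a: "a \<in> S0" and "e \<in> S" "u \<in> S"
    and e: "e * plus_of S0 a = e" and f: "f * star_of S0 a = star_of S0 a"
    and u: "u * (e * a * f) = e * a * f"
  shows "u * e = e"
proof -
  have "u * (e * a * f) * star_of S0 a = e * a * f * star_of S0 a"
    using u by simp
  then have "(u * e) * a = e * a"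
    by (simp add: mult.assoc f star_of_S0(2)[OF a])
  then have "(u * e) * plus_of S0 a = e * plus_of S0 a"
    using plus_of_cancel[OF a] subsemigroupD[OF subsemigroup_S] assms(2,3) by blast
  then show ?thesis
    by (simp add: mult.assoc e)
qed

lemma rep_right_unit:
  assumes a: "a \<in> S0" and "f \<in> S" "u \<in> S"
    and e: "plus_of S0 a * e = plus_of S0 a" and f: "star_of S0 a * f = f"
    and u: "e * a * f * u = e * a * f"
  shows "f * u = f"
proof -
  have "plus_of S0 a * (e * a * f * u) = plus_of S0 a * (e * a * f)"
    using u by simp
  then have "a * (f * u) = a * f"
    by (simp add: mult.assoc[symmetric] e plus_of_S0(2)[OF a])
  then have "star_of S0 a * (f * u) = star_of S0 a * f"
    using star_of_cancel[OF a] subsemigroupD[OF subsemigroup_S] assms(2,3) by blast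
  then show ?thesis
    by (simp add: mult.assoc[symmetric] f)
qed

lemma transversal_repE:
  assumes "transversal_rep S0 S x a"
  obtains e f where "a \<in> S0" "e \<in> idems S" "f \<in> idems S" "x = e * a * f"
    "e * plus_of S0 a = e" "plus_of S0 a * e = plus_of S0 a"
    "star_of S0 a * f = f" "f * star_of S0 a = star_of S0 a"
    "\<And>u. u \<in> S \<Longrightarrow> u * x = x \<Longrightarrow> u * e = e"
    "\<And>u. u \<in> S \<Longrightarrow> x * u = x \<Longrightarrow> f * u = f"
proof -
  obtain e f where rep: "a \<in> S0" "e \<in> idems S" "f \<in> idems S" "x = e * a * f"
    "e * plus_of S0 a = e" "plus_of S0 a * e = plus_of S0 a"
    "star_of S0 a * f = f" "f * star_of S0 a = star_of S0 a"
    using assms unfolding transversal_rep_iff by blast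
  have "e \<in> S" "f \<in> S"
    using rep(2,3) idemsD by blast+
  with rep show ?thesis
    using rep_left_unit[of a e _ f] rep_right_unit[of a f _ e] by (intro that[of e f]) simp_all
qed

lemma bar_idem_eq_if_greenL:
  assumes "g \<in> idems S" "q \<in> idems S0" "g * q = g" "q * g = q"
  shows "bar S0 S g = q"
proof (rule bar_eqI)
  show "g \<in> S" using assms(1) idemsD by blast
  have "q \<in> idems S" "q \<in> S0" "q * q = q"
    using assms(2) idems_S0_subset idemsD by blast+
  then show "transversal_rep S0 S g q"
    unfolding transversal_rep_iff using assms
    by (simp add: adequate_plus_of_idem[OF adequate_S0] adequate_star_of_idem[OF adequate_S0])
       (metis mult.assoc)
qed

lemma bar_idem_eq_if_greenR:
  assumes "g \<in> idems S" "q \<in> idems S0" "q * g = g" "g * q = q"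
  shows "bar S0 S g = q"
proof (rule bar_eqI)
  show "g \<in> S" using assms(1) idemsD by blast
  have "q \<in> idems S" "q \<in> S0" "q * q = q"
    using assms(2) idems_S0_subset idemsD by blast+
  then show "transversal_rep S0 S g q"
    unfolding transversal_rep_iff using assms
    by (simp add: adequate_plus_of_idem[OF adequate_S0] adequate_star_of_idem[OF adequate_S0])
       (metis mult.assoc)
qed

lemma mem_S0_if_greenR_greenL_idems:
  assumes z: "z \<in> S" and q: "q \<in> idems S0" and r: "r \<in> idems S0"
    and qz: "q * z = z" and zw: "z * w = q" and zr: "z * r = z" and w'z: "w' * z = r"
  shows "z \<in> S0"
proof -
  define c where "c = bar S0 S z"
  obtain e f where c: "c \<in> S0" and e: "e \<in> idems S" and f: "f \<in> idems S"
    and z_eq: "z = e * c * f"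
    and eP: "e * plus_of S0 c = e" and Pe: "plus_of S0 c * e = plus_of S0 c"
    and Qf: "star_of S0 c * f = f" and fQ: "f * star_of S0 c = star_of S0 c"
    and left_unit: "\<And>u. u \<in> S \<Longrightarrow> u * z = z \<Longrightarrow> u * e = e"
    and right_unit: "\<And>u. u \<in> S \<Longrightarrow> z * u = z \<Longrightarrow> f * u = f"
    using transversal_repE[OF bar_rep[OF z]] unfolding c_def by blast
  have qS: "q \<in> S" and rS: "r \<in> S"
    using q r S0_subset idemsD by blast+
  have ez: "e * z = z" and zf: "z * f = z"
    using z_eq e f idemsD by (metis mult.assoc)+
  have "bar S0 S e = q"
  proof (rule bar_idem_eq_if_greenR[OF e q])
    show "q * e = e" using left_unit[OF qS qz] .
    show "e * q = q" using ez zw by (metis mult.assoc)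
  qed
  moreover have "bar S0 S e = plus_of S0 c"
    using bar_idem_eq_if_greenL[OF e plus_of_S0(1)[OF c] eP Pe] .
  ultimately have P: "plus_of S0 c = q" by simp
  have "bar S0 S f = r"
  proof (rule bar_idem_eq_if_greenL[OF f r])
    show "f * r = f" using right_unit[OF rS zr] .
    show "r * f = r" using zf w'z by (metis mult.assoc)
  qed
  moreover have "bar S0 S f = star_of S0 c"
    using bar_idem_eq_if_greenR[OF f star_of_S0(1)[OF c] Qf fQ] .
  ultimately have Q: "star_of S0 c = r" by simp
  have "z = q * z * r"
    using qz zr by simp
  also have "\<dots> = (plus_of S0 c * e) * c * (f * star_of S0 c)"
    by (simp add: z_eq P Q mult.assoc)
  also have "\<dots> = c"
    by (simp add: Pe fQ plus_of_S0(2)[OF c] star_of_S0(2)[OF c])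
  finally show ?thesis
    using c by simp
qed

text \<open>For x = e a f with inverse v, the element f v e is an inverse of x with
  x (f v e) = e and (f v e) x = f; with a as the witness it is R-related to a* and L-related
  to a+, which puts it into S0.\<close>

lemma regular_common_inverse:
  assumes "regular_in S x"
  obtains x' where "x' \<in> S0" "mutual_inverse x x'" "mutual_inverse (bar S0 S x) x'"
proof -
  obtain w where x: "x \<in> S" and w: "w \<in> S" and xwx: "x * w * x = x"
    using assms by (auto simp: regular_in_def)
  define v where "v = w * x * w"
  have v: "v \<in> S" "x * v * x = x" "v * x * v = v"
    using x w subsemigroupD[OF subsemigroup_S] xwx by (simp_all add: v_def) (metis mult.assoc)+
  define a where "a = bar S0 S x"
  define P Q where "P = plus_of S0 a" and "Q = star_of S0 a"
  obtain e f where a: "a \<in> S0" and e: "e \<in> idems S" and f: "f \<in> idems S"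
    and x_eq: "x = e * a * f"
    and eP: "e * P = e" and Pe: "P * e = P" and Qf: "Q * f = f" and fQ: "f * Q = Q"
    and left_unit: "\<And>u. u \<in> S \<Longrightarrow> u * x = x \<Longrightarrow> u * e = e"
    and right_unit: "\<And>u. u \<in> S \<Longrightarrow> x * u = x \<Longrightarrow> f * u = f"
    using transversal_repE[OF bar_rep[OF x]] unfolding a_def P_def Q_def by blast
  have Pa: "P * a = a" and aQ: "a * Q = a"
    using plus_of_S0(2)[OF a] star_of_S0(2)[OF a] by (simp_all add: P_def Q_def)
  have ee: "e * e = e" and ff: "f * f = f"
    using e f idemsD by blast+
  have ex: "e * x = x" and xf: "x * f = x"
    using x_eq ee ff by (metis mult.assoc)+
  define x' where "x' = f * v * e"
  have "x * x' = x * v * e"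
    by (simp add: x'_def mult.assoc[symmetric] xf)
  then have xx': "x * x' = e"
    using left_unit[of "x * v"] x v subsemigroupD[OF subsemigroup_S] by (simp add: mult.assoc)
  have "x' * x = f * (v * x)"
    by (simp add: x'_def mult.assoc ex)
  then have x'x: "x' * x = f"
    using right_unit[of "v * x"] x v subsemigroupD[OF subsemigroup_S] by (simp add: mult.assoc)
  have "f * x' = x'"
    by (simp add: x'_def mult.assoc[symmetric] ff)
  then have "mutual_inverse x x'"
    unfolding mutual_inverse_def by (simp add: xx' x'x ex)
  have "P * x * Q = (P * e) * a * (f * Q)"
    by (simp add: x_eq mult.assoc)
  also have "\<dots> = a"
    by (simp add: Pe fQ Pa aQ mult.assoc)
  finally have a_eq: "a = P * x * Q" ..
  have Qx': "Q * x' = x'" and x'P: "x' * P = x'"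
    by (simp_all add: x'_def mult.assoc[symmetric] Qf) (simp add: mult.assoc eP)
  have ax': "a * x' = P"
    by (simp add: a_eq mult.assoc Qx') (simp add: mult.assoc[symmetric] xx' Pe)
  have x'a: "x' * a = Q"
    by (simp add: a_eq mult.assoc[symmetric] x'P) (simp add: mult.assoc x'x fQ)
  have "mutual_inverse a x'"
    unfolding mutual_inverse_def
    by (simp add: ax' Pa) (simp add: mult.assoc x'a Qx')
  moreover have "x' \<in> S0"
  proof (rule mem_S0_if_greenR_greenL_idems)
    show "x' \<in> S"
      using v(1) e f by (simp add: x'_def idems_def subsemigroupD[OF subsemigroup_S])
    show "Q \<in> idems S0" "P \<in> idems S0"
      using plus_of_S0(1)[OF a] star_of_S0(1)[OF a] by (simp_all add: P_def Q_def)
  qed (fact Qx' x'a x'P ax')+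
  ultimately show ?thesis
    using that \<open>mutual_inverse x x'\<close> by (simp add: a_def)
qed

lemma bar_eq_if_common_inverse:
  assumes z: "z \<in> S" and c: "c \<in> S0" and c': "c' \<in> S0"
    and inv_z: "mutual_inverse z c'" and inv_c: "mutual_inverse c c'"
  shows "bar S0 S z = c"
proof (rule bar_eqI[OF z])
  have zz: "z * c' * z = z" "c' * z * c' = c'" and cc: "c * c' * c = c" "c' * c * c' = c'"
    using inv_z inv_c by (simp_all add: mutual_inverse_def)
  have "c * c' \<in> idems S0" "c' * c \<in> idems S0"
    using c c' mutual_inverse_idem[OF inv_c] subsemigroupD[OF subsemigroup_S0]
    by (simp_all add: idems_def)
  then have P: "plus_of S0 c = c * c'" and Q: "star_of S0 c = c' * c"
    using c idemsD cc
    by (metis adequate_plus_of_eqI[OF adequate_S0] Rstar_if_greenR,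
        metis adequate_star_of_eqI[OF adequate_S0] Lstar_if_greenL mult.assoc)
  have "z * c' \<in> idems S" "c' * z \<in> idems S"
    using z c' S0_subset mutual_inverse_idem[OF inv_z] subsemigroupD[OF subsemigroup_S]
    by (auto simp: idems_def)
  moreover have "z = z * c' * c * (c' * z)"
    using zz cc by (metis mult.assoc)
  moreover have "z * c' * (c * c') = z * c'" "c * c' * (z * c') = c * c'"
    "c' * c * (c' * z) = c' * z" "c' * z * (c' * c) = c' * c"
    using zz cc by (metis mult.assoc)+
  ultimately show "transversal_rep S0 S z c"
    unfolding transversal_rep_iff P Q using c by blast
qed

end

theorem proposition2p5:
  fixes S S0 :: "'a::semigroup_mult set" and x y :: 'a
  assumes "quasi_adequate S"
    and "adequate_transversal S0 S"
    and "regular_in S x" and "regular_in S y"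
  shows "bar S0 S (x * y) = bar S0 S x * bar S0 S y"
proof -
  interpret adequate_transversal_semigroup S0 S
    using assms(1,2) by unfold_locales (simp_all add: quasi_adequate_def abundant_def)
  obtain x' where x': "x' \<in> S0" "mutual_inverse x x'" "mutual_inverse (bar S0 S x) x'"
    using regular_common_inverse[OF assms(3)] .
  obtain y' where y': "y' \<in> S0" "mutual_inverse y y'" "mutual_inverse (bar S0 S y) y'"
    using regular_common_inverse[OF assms(4)] .
  have bars: "bar S0 S x \<in> S0" "bar S0 S y \<in> S0" "x \<in> S" "y \<in> S"
    using assms(3,4) bar_rep by (auto simp: regular_in_def transversal_rep_def)
  then have idems_S0: "x' * bar S0 S x \<in> idems S0" "bar S0 S y * y' \<in> idems S0"
    and idems_S: "x' * x \<in> idems S" "y * y' \<in> idems S"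
    using x' y' mutual_inverse_idem S0_subset subsemigroupD[OF subsemigroup_S0]
      subsemigroupD[OF subsemigroup_S] by (auto simp: idems_def)
  have comm: "x' * bar S0 S x * (bar S0 S y * y') = bar S0 S y * y' * (x' * bar S0 S x)"
    using adequate_S0 idems_S0 by (simp add: adequate_def)
  have idem: "x' * x * (y * y') * (x' * x * (y * y')) = x' * x * (y * y')"
    "y * y' * (x' * x) * (y * y' * (x' * x)) = y * y' * (x' * x)"
    using assms(1) idems_S by (simp_all add: quasi_adequate_def subsemigroup_def idems_def)
  have "mutual_inverse (x * y) (y' * x')" "mutual_inverse (bar S0 S x * bar S0 S y) (y' * x')"
    using mutual_inverse_mult[OF x'(2,3) y'(2,3) comm idem] by simp_all
  moreover have "x * y \<in> S" "bar S0 S x * bar S0 S y \<in> S0" "y' * x' \<in> S0"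
    using bars x'(1) y'(1) subsemigroupD[OF subsemigroup_S] subsemigroupD[OF subsemigroup_S0]
    by simp_all
  ultimately show ?thesis
    using bar_eq_if_common_inverse by simp
qed

end
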